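(* Let $\lambda\in\mathbb N$ and $N=n+m$ with $n,m\in\mathbb N$. Then $$S_N(\lambda)=(-1)^{\lambda\frac{N(N-1)}{2}}\sum_{\substack{I_{kl}=-\lambda\\ 1\le k<l\le N}}^{\lambda}(-1)^{\sum_{k<l}I_{kl}}\prod_{1\le k<l\le N}\binom{2\lambda}{\lambda+I_{kl}}\prod_{k=1}^N\frac{1}{1+(N-1)\lambda+\sum_{l\ne k}I_{kl}},$$ $$S_{n,m}(\lambda)=(-1)^{\lambda(n(n-1)+m(m-1))/2}\sum_{\substack{I_{kl}=-\lambda\\ 1\le k<l\le N}}^{\lambda}(-1)^{\sum_{k<l}s_{kl}I_{kl}}\prod_{1\le k<l\le N}\binom{2\lambda}{\lambda+I_{kl}}\prod_{k=1}^N\frac{1}{1+(N-1)\lambda+\sum_{l\ne k}I_{kl}}.$$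
   Context: Define $$S_N(\lambda)=\int_{[0,1]^N}\prod_{1\le k<l\le N}|y_k-y_l|^{2\lambda}\,dy,$$ $$S_{n,m}(\lambda)=\int_{[0,1]^N}\prod_{1\le k<l\le n}|y_k-y_l|^{2\lambda}\prod_{\substack{k=1,\dots,n\\ l=n+1,\dots,N}}|y_k+y_l|^{2\lambda}\prod_{n+1\le k<l\le N}|y_k-y_l|^{2\lambda}\,dy.$$ The sums run over all families of integers $I_{kl}\in\{-\lambda,\dots,\lambda\}$, one for each pair $1\le k<l\le N$, and $I_{kl}:=-I_{lk}$ for $k>l$. For $k<l$, $s_{kl}=1$ if the factor for the pair $(k,l)$ in the integrand of $S_{n,m}$ is $|y_k-y_l|^{2\lambda}$ (i.e. $k,l$ both in $\{1,\dots,n\}$ or both in $\{n+1,\dots,N\}$), and $s_{kl}=0$ if it is $|y_k+y_l|^{2\lambda}$. *)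

theory Defs
  imports "HOL-Analysis.Analysis"
begin

definition pairs :: "nat \<Rightarrow> (nat \<times> nat) set" where
  "pairs N = {(k,l). 1 \<le> k \<and> k < l \<and> l \<le> N}"

definition Iext :: "(nat \<times> nat \<Rightarrow> int) \<Rightarrow> nat \<Rightarrow> nat \<Rightarrow> int" where
  "Iext I k l = (if k < l then I (k,l) else - I (l,k))"

text \<open>s_kl = 1 iff k,l lie in the same block {1..n} or {n+1..N}.\<close>
definition sameblock :: "nat \<Rightarrow> nat \<Rightarrow> nat \<Rightarrow> bool" where
  "sameblock n k l = ((k \<le> n) = (l \<le> n))"

definition cube :: "nat \<Rightarrow> (nat \<Rightarrow> real) set" where
  "cube N = PiE {1..N} (\<lambda>_. {0..1})"

definition SN :: "nat \<Rightarrow> nat \<Rightarrow> real" where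
  "SN N lam = (LINT y : cube N | PiM {1..N} (\<lambda>_. lborel).
      (\<Prod>(k,l)\<in>pairs N. \<bar>y k - y l\<bar> ^ (2*lam)))"

definition Snm :: "nat \<Rightarrow> nat \<Rightarrow> nat \<Rightarrow> real" where
  "Snm n m lam = (LINT y : cube (n+m) | PiM {1..n+m} (\<lambda>_. lborel).
      (\<Prod>(k,l)\<in>pairs (n+m).
         (if sameblock n k l then \<bar>y k - y l\<bar> ^ (2*lam) else \<bar>y k + y l\<bar> ^ (2*lam))))"

definition weight :: "nat \<Rightarrow> nat \<Rightarrow> (nat \<times> nat \<Rightarrow> int) \<Rightarrow> real" where
  "weight N lam I =
     (\<Prod>(k,l)\<in>pairs N. real ((2*lam) choose nat (int lam + I (k,l)))) *
     (\<Prod>k\<in>{1..N}. 1 / (1 + (real N - 1) * real lam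
                              + real_of_int (\<Sum>l\<in>{1..N}-{k}. Iext I k l)))"

definition families :: "nat \<Rightarrow> nat \<Rightarrow> (nat \<times> nat \<Rightarrow> int) set" where
  "families N lam = PiE (pairs N) (\<lambda>_. {- int lam .. int lam})"

end

theory Submission
  imports Defs
begin

text \<open>Expand every factor \<open>(y\<^sub>k \<plusminus> y\<^sub>l)\<^bsup>2\<lambda>\<^esup>\<close> by the binomial theorem, indexing the terms
  by the offset \<open>I\<^sub>k\<^sub>l \<in> {-\<lambda>..\<lambda>}\<close> of the exponent of \<open>y\<^sub>k\<close> from \<open>\<lambda>\<close>. Multiplying out gives a
  sum over families \<open>I\<close> of monomials in which \<open>y\<^sub>k\<close> carries the exponent
  \<open>(N - 1)\<lambda> + \<Sum>\<^sub>l\<^sub>\<noteq>\<^sub>k I\<^sub>k\<^sub>l\<close>, and integrating a monomial over the unit cube produces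
  the reciprocal factors. A difference factor contributes the sign
  \<open>(-1)\<^bsup>\<lambda> - I\<^sub>k\<^sub>l\<^esup> = (-1)\<^bsup>\<lambda>\<^esup> (-1)\<^bsup>I\<^sub>k\<^sub>l\<^esup>\<close>; collecting the \<open>(-1)\<^bsup>\<lambda>\<^esup>\<close> over all difference
  factors gives the global sign, whose exponent is \<open>\<lambda>\<close> times the number of such pairs.\<close>

lemma integrable_power_unit_interval:
  "integrable lborel (\<lambda>x::real. x ^ e * indicator {0..1} x)"
  by (intro borel_integrable_atLeastAtMost continuous_intros)

lemma indicator_PiE_eq_prod:
  assumes "finite A" and "y \<in> PiE A (\<lambda>_. UNIV)"
  shows "indicator (PiE A B) y = (\<Prod>k\<in>A. indicator (B k) (y k) :: real)"
  using assms by (auto simp: indicator_def PiE_iff prod_zero_iff)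

lemma
  fixes A :: "'i set"
  assumes "finite A"
  defines "M \<equiv> PiM A (\<lambda>_. lborel :: real measure)"
  shows integrable_monomial_unit_cube:
      "integrable M (\<lambda>y. indicator (PiE A (\<lambda>_. {0..1})) y * (\<Prod>k\<in>A. y k ^ e k))"
    and integral_monomial_unit_cube:
      "(\<integral>y. indicator (PiE A (\<lambda>_. {0..1})) y * (\<Prod>k\<in>A. y k ^ e k) \<partial>M) = (\<Prod>k\<in>A. 1 / (1 + real (e k)))"
        (is "?I = _")
proof -
  interpret product_sigma_finite "\<lambda>_::'i. lborel :: real measure"
    by (simp add: product_sigma_finite_def sigma_finite_lborel)
  have factor: "indicator (PiE A (\<lambda>_. {0..1})) y * (\<Prod>k\<in>A. y k ^ e k)
      = (\<Prod>k\<in>A. y k ^ e k * indicator {0..1} (y k))" if "y \<in> space M" for y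
    using that by (simp add: M_def space_PiM indicator_PiE_eq_prod[OF assms(1)] prod.distrib)
  have "integrable M (\<lambda>y. \<Prod>k\<in>A. y k ^ e k * indicator {0..1} (y k))"
    unfolding M_def by (intro product_integrable_prod assms integrable_power_unit_interval)
  then show "integrable M (\<lambda>y. indicator (PiE A (\<lambda>_. {0..1})) y * (\<Prod>k\<in>A. y k ^ e k))"
    by (subst Bochner_Integration.integrable_cong[OF refl factor]) simp_all
  have "?I = (\<integral>y. (\<Prod>k\<in>A. y k ^ e k * indicator {0..1} (y k)) \<partial>M)"
    by (subst Bochner_Integration.integral_cong[OF refl factor]) simp_all
  also have "\<dots> = (\<Prod>k\<in>A. \<integral>x. x ^ e k * indicator {0..1} x \<partial>lborel)"
    unfolding M_def by (intro product_integral_prod assms integrable_power_unit_interval)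
  also have "\<dots> = (\<Prod>k\<in>A. 1 / (1 + real (e k)))"
    by (simp add: integral_power)
  finally show "?I = (\<Prod>k\<in>A. 1 / (1 + real (e k)))" .
qed

lemma binomial_centered:
  fixes a b :: "'a::comm_semiring_1"
  shows "(a + b) ^ (2*lam) = (\<Sum>i\<in>{-int lam..int lam}.
           of_nat ((2*lam) choose nat (int lam + i)) * a ^ nat (int lam + i) * b ^ nat (int lam - i))"
proof -
  have "(a + b) ^ (2*lam) = (\<Sum>j\<le>2*lam. of_nat ((2*lam) choose j) * a ^ j * b ^ (2*lam - j))"
    by (simp add: binomial_ring)
  also have "\<dots> = (\<Sum>i\<in>{-int lam..int lam}.
           of_nat ((2*lam) choose nat (int lam + i)) * a ^ nat (int lam + i) * b ^ nat (int lam - i))"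
  proof (rule sum.reindex_bij_witness[where i="\<lambda>i. nat (int lam + i)" and j="\<lambda>j. int j - int lam"])
    fix j assume "j \<in> {..2*lam}"
    then have "nat (int lam - (int j - int lam)) = 2*lam - j" by auto
    then show "of_nat ((2*lam) choose nat (int lam + (int j - int lam))) * a ^ nat (int lam + (int j - int lam))
        * b ^ nat (int lam - (int j - int lam)) = of_nat ((2*lam) choose j) * a ^ j * b ^ (2*lam - j)"
      by simp
  qed auto
  finally show ?thesis .
qed

lemma minus_one_power_centered:
  assumes "\<bar>i\<bar> \<le> int lam"
  shows "(-1::'a::division_ring) ^ nat (int lam - i) = (-1) ^ lam * (-1) powi i"
proof -
  have "even (nat (int lam - i)) \<longleftrightarrow> (even lam \<longleftrightarrow> even i)"
    using assms by (simp add: even_nat_iff)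
  then show ?thesis
    by (auto simp: power_int_minus_left minus_one_power_iff)
qed

lemma power_sum_or_diff_centered:
  fixes a b :: "'a::field"
  shows "(if s then a - b else a + b) ^ (2*lam) = (if s then (-1) ^ lam else 1) *
     (\<Sum>i\<in>{-int lam..int lam}. (-1) powi (if s then i else 0) *
        of_nat ((2*lam) choose nat (int lam + i)) * a ^ nat (int lam + i) * b ^ nat (int lam - i))"
proof (cases s)
  case True
  have summand: "of_nat ((2*lam) choose nat (int lam + i)) * a ^ nat (int lam + i) * (-b) ^ nat (int lam - i)
      = (-1) ^ lam * ((-1) powi i * of_nat ((2*lam) choose nat (int lam + i))
          * a ^ nat (int lam + i) * b ^ nat (int lam - i))"
    if "i \<in> {-int lam..int lam}" for i
  proof -
    have "\<bar>i\<bar> \<le> int lam"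
      using that by auto
    then have "(-b) ^ nat (int lam - i) = (-1) ^ lam * (-1) powi i * b ^ nat (int lam - i)"
      by (simp only: power_minus[of b] minus_one_power_centered)
    then show ?thesis
      by (simp only: ac_simps)
  qed
  have "(a - b) ^ (2*lam) = (a + -b) ^ (2*lam)"
    by simp
  also have "\<dots> = (-1) ^ lam * (\<Sum>i\<in>{-int lam..int lam}. (-1) powi i *
        of_nat ((2*lam) choose nat (int lam + i)) * a ^ nat (int lam + i) * b ^ nat (int lam - i))"
    unfolding binomial_centered sum_distrib_left
    by (rule sum.cong[OF refl summand])
  finally show ?thesis
    using True
    by (simp only: if_True)
next
  case False
  then show ?thesis
    by (simp only: if_False power_int_0_right mult_1_left binomial_centered)
qed

lemma prod_power_int:
  fixes x :: "'a::field"
  assumes "x \<noteq> 0"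
  shows "(\<Prod>p\<in>A. x powi f p) = x powi (\<Sum>p\<in>A. f p)"
  by (induction A rule: infinite_finite_induct) (simp_all add: power_int_add assms)

lemma finite_pairs: "finite (pairs N)"
  by (rule finite_subset[of _ "{1..N} \<times> {1..N}"]) (auto simp: pairs_def)

lemma prod_pairs_monomial:
  fixes y :: "nat \<Rightarrow> 'a::comm_monoid_mult"
  shows "(\<Prod>p\<in>pairs N. y (fst p) ^ a p) * (\<Prod>p\<in>pairs N. y (snd p) ^ b p)
       = (\<Prod>k\<in>{1..N}. y k ^ ((\<Sum>l\<in>{k<..N}. a (k,l)) + (\<Sum>l\<in>{1..<k}. b (l,k))))"
proof -
  have by_first: "pairs N = Sigma {1..N} (\<lambda>k. {k<..N})"
    by (auto simp: pairs_def)
  have by_second: "pairs N = (\<lambda>(l,k). (k,l)) ` Sigma {1..N} (\<lambda>l. {1..<l})"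
    by (auto simp: pairs_def image_iff)
  have "(\<Prod>p\<in>pairs N. y (fst p) ^ a p) = (\<Prod>k\<in>{1..N}. \<Prod>l\<in>{k<..N}. y k ^ a (k,l))"
    unfolding by_first by (subst prod.Sigma) (auto simp: case_prod_beta)
  moreover have "(\<Prod>p\<in>pairs N. y (snd p) ^ b p) = (\<Prod>l\<in>{1..N}. \<Prod>k\<in>{1..<l}. y l ^ b (k,l))"
    unfolding by_second
    by (subst prod.reindex) (auto simp: inj_on_def case_prod_beta prod.Sigma)
  ultimately show ?thesis
    by (simp add: prod.distrib power_sum power_add)
qed

definition monomial_degree :: "nat \<Rightarrow> nat \<Rightarrow> (nat \<times> nat \<Rightarrow> int) \<Rightarrow> nat \<Rightarrow> nat" where
  "monomial_degree N lam I k =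
     (\<Sum>l\<in>{k<..N}. nat (int lam + I (k,l))) + (\<Sum>l\<in>{1..<k}. nat (int lam - I (l,k)))"

lemma families_bound: "I \<in> families N lam \<Longrightarrow> p \<in> pairs N \<Longrightarrow> \<bar>I p\<bar> \<le> int lam"
  by (auto simp: families_def PiE_iff)

lemma of_nat_monomial_degree:
  assumes I: "I \<in> families N lam" and k: "k \<in> {1..N}"
  shows "int (monomial_degree N lam I k) = int lam * (int N - 1) + (\<Sum>l\<in>{1..N}-{k}. Iext I k l)"
proof -
  have "int (monomial_degree N lam I k)
      = (\<Sum>l\<in>{k<..N}. int lam + I (k,l)) + (\<Sum>l\<in>{1..<k}. int lam - I (l,k))"
    unfolding monomial_degree_def of_nat_add of_nat_sum
    using k families_bound[OF I] by (intro arg_cong2[where f = "(+)"] sum.cong) (force simp: pairs_def)+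
  also have "\<dots> = int lam * (int (N - k) + int (k - 1))
      + ((\<Sum>l\<in>{k<..N}. Iext I k l) + (\<Sum>l\<in>{1..<k}. Iext I k l))"
  proof -
    have "(\<Sum>l\<in>{k<..N}. Iext I k l) = (\<Sum>l\<in>{k<..N}. I (k,l))"
         "(\<Sum>l\<in>{1..<k}. Iext I k l) = (\<Sum>l\<in>{1..<k}. - I (l,k))"
      by (auto simp: Iext_def intro: sum.cong)
    then show ?thesis
      by (simp add: sum.distrib sum_subtractf sum_negf algebra_simps)
  qed
  also have "\<dots> = int lam * (int N - 1) + (\<Sum>l\<in>{1..N}-{k}. Iext I k l)"
  proof -
    have "{1..N} - {k} = {k<..N} \<union> {1..<k}"
      using k by auto
    then have "(\<Sum>l\<in>{1..N}-{k}. Iext I k l) = (\<Sum>l\<in>{k<..N}. Iext I k l) + (\<Sum>l\<in>{1..<k}. Iext I k l)"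
      by (metis finite_atLeastLessThan finite_greaterThanAtMost sum.union_disjoint
          greaterThanAtMost_iff atLeastLessThan_iff disjoint_iff not_less_iff_gr_or_eq)
    then show ?thesis
      using k by (simp add: of_nat_diff algebra_simps)
  qed
  finally show ?thesis .
qed

lemma weight_eq:
  assumes "I \<in> families N lam"
  shows "weight N lam I = (\<Prod>p\<in>pairs N. real ((2*lam) choose nat (int lam + I p)))
      * (\<Prod>k\<in>{1..N}. 1 / (1 + real (monomial_degree N lam I k)))"
proof -
  have degree: "real (monomial_degree N lam I k)
      = (real N - 1) * real lam + real_of_int (\<Sum>l\<in>{1..N}-{k}. Iext I k l)"
    if "k \<in> {1..N}" for k
  proof -
    have "real_of_int (int (monomial_degree N lam I k))
        = real_of_int (int lam * (int N - 1) + (\<Sum>l\<in>{1..N}-{k}. Iext I k l))"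
      unfolding of_nat_monomial_degree[OF assms that] ..
    then show ?thesis
      by (simp add: algebra_simps)
  qed
  show ?thesis
    unfolding weight_def
    by (intro arg_cong2[where f = "(*)"] prod.cong) (simp_all add: case_prod_beta degree add.assoc)
qed

lemma prod_pairs_expansion:
  fixes y :: "nat \<Rightarrow> 'a::field"
  shows "(\<Prod>(k,l)\<in>pairs N. (if S k l then y k - y l else y k + y l) ^ (2*lam))
    = (-1) ^ (lam * card (pairs N \<inter> {(k,l). S k l})) *
      (\<Sum>I\<in>families N lam. (-1) powi (\<Sum>(k,l)\<in>pairs N. if S k l then I (k,l) else 0)
         * (\<Prod>p\<in>pairs N. of_nat ((2*lam) choose nat (int lam + I p)))
         * (\<Prod>k\<in>{1..N}. y k ^ monomial_degree N lam I k))"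
proof -
  define c where "c p i = (-1) powi (if case_prod S p then i else 0)
      * of_nat ((2*lam) choose nat (int lam + i)) * (y (fst p) ^ nat (int lam + i) * y (snd p) ^ nat (int lam - i))"
    for p i
  have monomial: "(\<Prod>p\<in>pairs N. c p (I p)) = (-1) powi (\<Sum>(k,l)\<in>pairs N. if S k l then I (k,l) else 0)
         * (\<Prod>p\<in>pairs N. of_nat ((2*lam) choose nat (int lam + I p)))
         * (\<Prod>k\<in>{1..N}. y k ^ monomial_degree N lam I k)"
    for I
  proof -
    have "(\<Sum>p\<in>pairs N. if case_prod S p then I p else 0) = (\<Sum>(k,l)\<in>pairs N. if S k l then I (k,l) else 0)"
      by (rule sum.cong) auto
    then show ?thesis
      unfolding c_def prod.distrib prod_power_int[of "-1", simplified] monomial_degree_def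
        prod_pairs_monomial[of y "\<lambda>p. nat (int lam + I p)" N "\<lambda>p. nat (int lam - I p)"]
      by (simp only: ac_simps)
  qed
  have "(\<Prod>(k,l)\<in>pairs N. (if S k l then y k - y l else y k + y l) ^ (2*lam))
      = (\<Prod>p\<in>pairs N. if case_prod S p then (-1) ^ lam else 1) * (\<Prod>p\<in>pairs N. \<Sum>i\<in>{-int lam..int lam}. c p i)"
    unfolding c_def prod.distrib[symmetric] power_sum_or_diff_centered
    by (intro prod.cong) (auto simp: case_prod_beta mult.assoc)
  also have "(\<Prod>p\<in>pairs N. if case_prod S p then (-1) ^ lam else 1) = (-1) ^ (lam * card (pairs N \<inter> {(k,l). S k l}))"
    by (simp add: prod.If_cases finite_pairs power_mult mult.commute)
  also have "(\<Prod>p\<in>pairs N. \<Sum>i\<in>{-int lam..int lam}. c p i) = (\<Sum>I\<in>families N lam. \<Prod>p\<in>pairs N. c p (I p))"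
    unfolding families_def by (rule prod_sum_PiE) (auto simp: finite_pairs)
  also have "(\<Sum>I\<in>families N lam. \<Prod>p\<in>pairs N. c p (I p)) =
      (\<Sum>I\<in>families N lam. (-1) powi (\<Sum>(k,l)\<in>pairs N. if S k l then I (k,l) else 0)
         * (\<Prod>p\<in>pairs N. of_nat ((2*lam) choose nat (int lam + I p)))
         * (\<Prod>k\<in>{1..N}. y k ^ monomial_degree N lam I k))"
    by (rule sum.cong[OF refl monomial])
  finally show ?thesis .
qed

theorem integral_cube_prod_pairs:
  "(LINT y : cube N | PiM {1..N} (\<lambda>_. lborel).
      (\<Prod>(k,l)\<in>pairs N. (if S k l then y k - y l else y k + y l) ^ (2*lam)))
   = (-1) ^ (lam * card (pairs N \<inter> {(k,l). S k l})) *
      (\<Sum>I\<in>families N lam.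
         (-1) powi (\<Sum>(k,l)\<in>pairs N. if S k l then I (k,l) else 0) * weight N lam I)"
proof -
  let ?M = "PiM {1..N} (\<lambda>_. lborel :: real measure)"
  let ?monomial = "\<lambda>I y. indicator (cube N) y * (\<Prod>k\<in>{1..N}. y k ^ monomial_degree N lam I k)"
  define c where "c I = (-1) powi (\<Sum>(k,l)\<in>pairs N. if S k l then I (k,l) else 0)
      * (\<Prod>p\<in>pairs N. real ((2*lam) choose nat (int lam + I p)))" for I
  have integrable: "integrable ?M (?monomial I)" for I
    unfolding cube_def by (rule integrable_monomial_unit_cube) simp
  have expansion: "indicator (cube N) y *\<^sub>R (\<Prod>(k,l)\<in>pairs N. (if S k l then y k - y l else y k + y l) ^ (2*lam))
      = (-1) ^ (lam * card (pairs N \<inter> {(k,l). S k l})) * (\<Sum>I\<in>families N lam. c I * ?monomial I y)"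
    for y :: "nat \<Rightarrow> real"
    unfolding prod_pairs_expansion c_def by (simp add: sum_distrib_left mult_ac)
  have "(LINT y : cube N | ?M. (\<Prod>(k,l)\<in>pairs N. (if S k l then y k - y l else y k + y l) ^ (2*lam)))
      = (-1) ^ (lam * card (pairs N \<inter> {(k,l). S k l})) * (\<Sum>I\<in>families N lam. c I * integral\<^sup>L ?M (?monomial I))"
  proof -
    have "integral\<^sup>L ?M (\<lambda>y. \<Sum>I\<in>families N lam. c I * ?monomial I y)
        = (\<Sum>I\<in>families N lam. c I * integral\<^sup>L ?M (?monomial I))"
      by (simp only: Bochner_Integration.integral_sum[OF integrable_mult_right[OF integrable]] integral_mult_right_zero)
    then show ?thesis
      unfolding set_lebesgue_integral_def expansion integral_mult_right_zero by (rule arg_cong)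
  qed
  also have "\<dots> = (-1) ^ (lam * card (pairs N \<inter> {(k,l). S k l})) *
      (\<Sum>I\<in>families N lam. (-1) powi (\<Sum>(k,l)\<in>pairs N. if S k l then I (k,l) else 0) * weight N lam I)"
    unfolding cube_def c_def
    by (simp add: integral_monomial_unit_cube weight_eq mult.assoc cong: sum.cong)
  finally show ?thesis .
qed

lemma pairs_Suc: "pairs (Suc N) = pairs N \<union> (\<lambda>k. (k, Suc N)) ` {1..N}"
  by (auto simp: pairs_def)

lemma card_pairs: "card (pairs N) = N * (N - 1) div 2"
proof (induction N)
  case 0
  have "pairs 0 = {}" by (auto simp: pairs_def)
  then show ?case by simp
next
  case (Suc N)
  have "card (pairs (Suc N)) = card (pairs N) + N"
    unfolding pairs_Suc
    by (subst card_Un_disjoint[OF finite_pairs]) (auto simp: pairs_def card_image inj_on_def)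
  also have "\<dots> = Suc N * (Suc N - 1) div 2"
    unfolding Suc by (cases N) auto
  finally show ?case .
qed

lemma pairs_sameblock:
  "pairs (n+m) \<inter> {(k,l). sameblock n k l} = pairs n \<union> (\<lambda>(k,l). (k+n, l+n)) ` pairs m"
proof (intro equalityI subsetI)
  fix p assume "p \<in> pairs (n+m) \<inter> {(k,l). sameblock n k l}"
  then obtain k l where p: "p = (k,l)" "1 \<le> k" "k < l" "l \<le> n+m" "k \<le> n \<longleftrightarrow> l \<le> n"
    by (auto simp: pairs_def sameblock_def)
  show "p \<in> pairs n \<union> (\<lambda>(k,l). (k+n, l+n)) ` pairs m"
  proof (cases "l \<le> n")
    case False
    then have "(k-n, l-n) \<in> pairs m" "p = (\<lambda>(k,l). (k+n, l+n)) (k-n, l-n)"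
      using p by (auto simp: pairs_def)
    then show ?thesis by blast
  qed (use p in \<open>auto simp: pairs_def\<close>)
qed (auto simp: pairs_def sameblock_def)

lemma card_pairs_sameblock:
  "card (pairs (n+m) \<inter> {(k,l). sameblock n k l}) = (n * (n - 1) + m * (m - 1)) div 2"
proof -
  have "card (pairs (n+m) \<inter> {(k,l). sameblock n k l}) = card (pairs n) + card (pairs m)"
    unfolding pairs_sameblock
    by (subst card_Un_disjoint[OF finite_pairs finite_imageI[OF finite_pairs]])
      (auto simp: card_image inj_on_def pairs_def)
  moreover have "even (n * (n - 1))" "even (m * (m - 1))"
    by auto
  ultimately show ?thesis
    unfolding card_pairs by (auto elim!: evenE)
qed

lemma SN_eq_sum_families:
  "SN N lam = (-1) ^ (lam * card (pairs N)) *
     (\<Sum>I\<in>families N lam. (-1) powi (\<Sum>p\<in>pairs N. I p) * weight N lam I)"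
proof -
  have "SN N lam = (LINT y : cube N | PiM {1..N} (\<lambda>_. lborel).
      (\<Prod>(k,l)\<in>pairs N. (y k - y l) ^ (2*lam)))"
    unfolding SN_def by (simp add: power_even_abs)
  then show ?thesis
    using integral_cube_prod_pairs[where S = "\<lambda>_ _. True"] by simp
qed

lemma Snm_eq_sum_families:
  "Snm n m lam = (-1) ^ (lam * card (pairs (n+m) \<inter> {(k,l). sameblock n k l})) *
     (\<Sum>I\<in>families (n+m) lam.
        (-1) powi (\<Sum>(k,l)\<in>pairs (n+m). if sameblock n k l then I (k,l) else 0)
        * weight (n+m) lam I)"
proof -
  have "(if s then \<bar>a - b\<bar> ^ (2*lam) else \<bar>a + b\<bar> ^ (2*lam)) = (if s then a - b else a + b) ^ (2*lam)"
    for s and a b :: real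
    by (simp add: power_even_abs)
  then show ?thesis
    unfolding Snm_def integral_cube_prod_pairs[symmetric] by (simp only:)
qed

theorem proposition3:
  fixes lam n m N :: nat
  assumes "N = n + m"
  shows "SN N lam = (-1::real) ^ (lam * (N * (N - 1) div 2)) *
           (\<Sum>I\<in>families N lam.
              (-1::real) powi (\<Sum>p\<in>pairs N. I p) * weight N lam I)
       \<and> Snm n m lam = (-1::real) ^ (lam * ((n * (n - 1) + m * (m - 1)) div 2)) *
           (\<Sum>I\<in>families N lam.
              (-1::real) powi (\<Sum>(k,l)\<in>pairs N. if sameblock n k l then I (k,l) else 0)
              * weight N lam I)"
  unfolding SN_eq_sum_families Snm_eq_sum_families card_pairs card_pairs_sameblock assms
  by simp

end
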